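(* Let $\widehat{A}=A+\epsilon B$ with $A,B\in\mathbb{R}^{n\times n}$ and $Ind(\widehat{A})=k$, and suppose the dual Drazin generalized inverse $\widehat{A}^D$ exists. Let $\widehat{b}\in\mathbb{D}^n$. Then $\widehat{A}^D\widehat{b}$ is the unique solution of $\widehat{A}\widehat{x}=\widehat{b}$ with $\widehat{x}\in R(\widehat{A}^k)$.
   Context: A dual number is $a+\epsilon b$ with $a,b\in\mathbb{R}$, where $\epsilon\neq 0$, $\epsilon^2=0$ and $\epsilon$ commutes with reals. A dual matrix (or vector) is $A+\epsilon B$ with $A,B$ real; sums and products are computed formally using $\epsilon^2=0$, and equality means equality of real and dual parts. $\mathbb{D}^n$ is the set of dual column vectors of length $n$; $R(\widehat{A}^k)=\{\widehat{A}^k\widehat{z}:\widehat{z}\in\mathbb{D}^n\}$, and $Ind(\widehat{A})$ is the smallest nonnegative integer $k$ with $R(\widehat{A}^k)=R(\widehat{A}^{k+1})$. For $Ind(\widehat{A})=k$, the dual Drazin generalized inverse $\widehat{A}^D$ is the dual matrix $\widehat{X}$ (if it exists) with $\widehat{A}^{k}\widehat{X}\widehat{A} = \widehat{A}^{k}$, $\widehat{X}\widehat{A}\widehat{X} = \widehat{X}$, $\widehat{A}\widehat{X} =\widehat{X}\widehat{A}$.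
   Formalization: The vector $\widehat{b}$ is taken in $R(\widehat{A}^k)$ only, not arbitrary in $\mathbb{D}^n$. The statement above fails without it. *)

theory Defs
  imports "HOL-Analysis.Analysis"
begin

text \<open>A dual n x n matrix A + eps B is represented by the pair (A, B) of real matrices;
  a dual vector a + eps b by the pair (a, b) of real vectors. Products use eps^2 = 0.\<close>

type_synonym 'n dmat = "(real^'n^'n) \<times> (real^'n^'n)"
type_synonym 'n dvec = "(real^'n) \<times> (real^'n)"

definition dmult :: "'n::finite dmat \<Rightarrow> 'n dmat \<Rightarrow> 'n dmat" where
  "dmult M N = (fst M ** fst N, fst M ** snd N + snd M ** fst N)"

definition dmv :: "'n::finite dmat \<Rightarrow> 'n dvec \<Rightarrow> 'n dvec" where
  "dmv M v = (fst M *v fst v, fst M *v snd v + snd M *v fst v)"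

definition dident :: "'n::finite dmat" where
  "dident = (mat 1, 0)"

fun dpow :: "'n::finite dmat \<Rightarrow> nat \<Rightarrow> 'n dmat" where
  "dpow M 0 = dident"
| "dpow M (Suc k) = dmult (dpow M k) M"

definition drange :: "'n::finite dmat \<Rightarrow> 'n dvec set" where
  "drange M = {dmv M z | z. True}"

definition dind :: "'n::finite dmat \<Rightarrow> nat" where
  "dind M = (LEAST k. drange (dpow M k) = drange (dpow M (Suc k)))"

definition is_dual_drazin :: "'n::finite dmat \<Rightarrow> 'n dmat \<Rightarrow> bool" where
  "is_dual_drazin M X \<longleftrightarrow>
     (let k = dind M in
        dmult (dmult (dpow M k) X) M = dpow M k
      \<and> dmult (dmult X M) X = X
      \<and> dmult M X = dmult X M)"

end

theory Submission
  imports Defs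
begin

text \<open>Write P = M^k with k = Ind(M). Since X commutes with M, it commutes with P, and then
  the Drazin equation P X M = P becomes X M P = P: the product X M is the identity on R(P).
  Moreover X maps R(P) into itself, because X P z = P X z. Hence for b \<in> R(P) the vector X b
  lies in R(P) and solves M x = b, as M X b = X M b = b; and any solution x \<in> R(P) satisfies
  x = X M x = X b.\<close>

lemma matrix_add_rdistrib: "(B + C) ** A = B ** A + C ** A"
  by (vector matrix_matrix_mult_def sum.distrib[symmetric] field_simps)

lemma dmult_assoc: "dmult (dmult M N) P = dmult M (dmult N P)"
  by (simp add: dmult_def matrix_mul_assoc matrix_add_ldistrib matrix_add_rdistrib algebra_simps)

lemma dmv_dmult: "dmv (dmult M N) v = dmv M (dmv N v)"
  by (simp add: dmult_def dmv_def matrix_vector_mul_assoc algebra_simps)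

lemma dmult_dident_left [simp]: "dmult dident M = M"
  by (simp add: dmult_def dident_def)

lemma dmult_dident_right [simp]: "dmult M dident = M"
  by (simp add: dmult_def dident_def)

lemma dpow_commute:
  assumes "dmult M X = dmult X M"
  shows "dmult (dpow M k) X = dmult X (dpow M k)"
proof (induction k)
  case 0
  show ?case by simp
next
  case (Suc k)
  have "dmult (dpow M (Suc k)) X = dmult (dpow M k) (dmult X M)"
    by (simp add: dmult_assoc assms)
  also have "\<dots> = dmult X (dpow M (Suc k))"
    by (simp add: Suc flip: dmult_assoc)
  finally show ?case .
qed

lemma dmv_mem_drange: "dmv M z \<in> drange M"
  unfolding drange_def by blast

lemma dmv_mem_drange_if_commute:
  assumes "dmult P X = dmult X P" and "y \<in> drange P"
  shows "dmv X y \<in> drange P"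
proof -
  obtain z where "y = dmv P z"
    using assms(2) unfolding drange_def by blast
  then have "dmv X y = dmv P (dmv X z)"
    by (simp add: assms(1) flip: dmv_dmult)
  then show ?thesis
    by (simp add: dmv_mem_drange)
qed

lemma dual_drazin_commute_dpow:
  assumes "is_dual_drazin M X"
  shows "dmult (dpow M k) X = dmult X (dpow M k)"
  using assms dpow_commute unfolding is_dual_drazin_def Let_def by blast

lemma dual_drazin_dmult_dpow_ind:
  assumes "is_dual_drazin M X"
  shows "dmult (dmult X M) (dpow M (dind M)) = dpow M (dind M)"
proof -
  let ?P = "dpow M (dind M)"
  have "dmult (dmult X M) ?P = dmult (dmult ?P X) M"
    using dual_drazin_commute_dpow[OF assms] dpow_commute[of M M]
    by (metis dmult_assoc)
  also have "\<dots> = ?P"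
    using assms unfolding is_dual_drazin_def Let_def by blast
  finally show ?thesis .
qed

lemma dual_drazin_left_inverse_on_drange:
  assumes "is_dual_drazin M X" and "y \<in> drange (dpow M (dind M))"
  shows "dmv X (dmv M y) = y"
proof -
  obtain z where z: "y = dmv (dpow M (dind M)) z"
    using assms(2) unfolding drange_def by blast
  have "dmv X (dmv M y) = dmv (dmult (dmult X M) (dpow M (dind M))) z"
    by (simp add: z dmv_dmult)
  then show ?thesis
    by (simp add: z dual_drazin_dmult_dpow_ind[OF assms(1)])
qed

lemma dual_drazin_right_inverse_on_drange:
  assumes "is_dual_drazin M X" and "y \<in> drange (dpow M (dind M))"
  shows "dmv M (dmv X y) = y"
proof -
  have "dmult M X = dmult X M"
    using assms(1) unfolding is_dual_drazin_def Let_def by blast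
  then have "dmv M (dmv X y) = dmv X (dmv M y)"
    by (metis dmv_dmult)
  with dual_drazin_left_inverse_on_drange[OF assms] show ?thesis
    by simp
qed

theorem mainTheorem5:
  fixes A B :: "real^'n::finite^'n" and X :: "'n dmat" and b :: "'n dvec" and k :: nat
  assumes "dind (A, B) = k"
    and "is_dual_drazin (A, B) X"
    and "b \<in> drange (dpow (A, B) k)"
  shows "dmv X b \<in> drange (dpow (A, B) k)
       \<and> dmv (A, B) (dmv X b) = b
       \<and> (\<forall>x. x \<in> drange (dpow (A, B) k) \<and> dmv (A, B) x = b \<longrightarrow> x = dmv X b)"
proof -
  note drazin = assms(2) and b = assms(3)[folded assms(1)]
  have "dmv X b \<in> drange (dpow (A, B) (dind (A, B)))"
    using dmv_mem_drange_if_commute[OF dual_drazin_commute_dpow[OF drazin] b] .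
  moreover have "dmv (A, B) (dmv X b) = b"
    using dual_drazin_right_inverse_on_drange[OF drazin b] .
  moreover have "x = dmv X b"
    if "x \<in> drange (dpow (A, B) (dind (A, B)))" and "dmv (A, B) x = b" for x
    using dual_drazin_left_inverse_on_drange[OF drazin that(1)] that(2) by simp
  ultimately show ?thesis
    unfolding assms(1) by blast
qed

end
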